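(* Suppose assumptions (i), (ii), (iv) hold. There is a number $\lambda^*$ such that, if $\lambda \geq \lambda^*$, all trajectories of the system $$\begin{aligned} \dot\varrho &= 0,\qquad \dot w = s(\varrho,w),\qquad \dot z = f_0(\varrho,w,z),\\ \dot\chi &= (A-KC)\chi + b\,\beta^T(X,\chi_1+\tau_1)\tilde\theta + \Delta(\chi_1,\tau_1,\theta) + \varphi(\varrho,w,z),\\ \dot{\tilde\theta} &= -\beta(X,\chi_1+\tau_1)\chi_1 - \mathrm{dzv}_\ell(\tilde\theta+\theta(\varrho)),\\ \dot X &= FX + G\,\Omega(\chi_1+\tau_1), \end{aligned}$$ with initial conditions $(\varrho,w,z)\in \mathbf{Z}=P\times W\times Z$, are bounded.
   Context: Plant: $\dot z = f_0(\varrho,w,z)+f_1(\varrho,w,z,e)e$, $\dot e = q(\varrho,w,z,e)+u$, with $z\in\mathbb{R}^n$, $e,u\in\mathbb{R}$, driven by the exosystem $\dot\varrho=0$, $\dot w = s(\varrho,w)$; all functions $C^1$; $P\subset\mathbb{R}^p$, $W\subset\mathbb{R}^s$, $Z\subset\mathbb{R}^n$ compact. Set $\mathbf{z}=\mathrm{col}(\varrho,w,z)$, $\mathbf{f}_0(\mathbf{z})=\mathrm{col}(0,s(\varrho,w),f_0(\varrho,w,z))$, $c(\mathbf{z}) = -q(\varrho,w,z,0)$, $\mathbf{Z}=P\times W\times Z$. Assumption (i): $P\times W$ is a differential submanifold with boundary of $\mathbb{R}^p\times\mathbb{R}^s$, invariant for the exosystem. Assumption (ii): there is a compact $\mathcal{Z}\subset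 P\times W\times\mathbb{R}^n$ containing the positive orbit of $\mathbf{Z}$ under $\dot{\mathbf{z}}=\mathbf{f}_0(\mathbf{z})$; the $\omega$-limit set $\mathcal{A}_0=\omega(\mathbf{Z})$ is a differential submanifold with boundary; and there is $d_1>0$ such that $\mathbf{z}\in P\times W\times\mathbb{R}^n$, $\mathrm{dist}(\mathbf{z},\mathcal{A}_0)\le d_1$ imply $\mathbf{z}\in\mathbf{Z}$. Assumption (iv): there exist an integer $d$, a $C^1$ map $\tau:\mathcal{Z}\to\mathbb{R}^d$, a $C^0$ map $\theta:P\to\mathbb{R}^q$, the observable pair $(A,C)$ with $A$ the $d\times d$ upper shift matrix (ones on the superdiagonal, zeros elsewhere) and $C=(1\ 0\ \cdots\ 0)$, and $C^1$ maps $\phi:\mathbb{R}\to\mathbb{R}^d$, $\Omega:\mathbb{R}\to\mathbb{R}^{d\times q}$ (which may be taken with compact support, hence globally Lipschitz) such that $\frac{\partial\tau}{\partial\mathbf{z}}\mathbf{f}_0(\mathbf{z}) = A\tau(\mathbf{z})+\phi(C\tau(\mathbf{z}))+\Omega(C\tau(\mathbf{z}))\theta(\varrho)$ and $c(\mathbf{z})=C\tau(\mathbf{z})$ for all $\mathbf{z}\in\mathcal{A}_0$. Design quantities: $b=\mathrm{col}(1,b_2,\dots,b_d)$ where $\lambda^{d-1}+b_2\lambda^{d-2}+\dots+b_d$ has $d-1$ distinct roots with negative real part; $F$ is the $(d-1)\times(d-1)$ matrix with first column $-\mathrm{col}(b_2,\dots,b_d)$ plus ones on the superdiagonal (Hurwitz);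 $G=(-\mathrm{col}(b_2,\dots,b_d)\ \ I_{d-1})$ is $(d-1)\times d$; $X$ is $(d-1)\times q$, $M(X)=\mathrm{col}(0,X)$; $\beta(X,\xi_1)=[CAM(X)+C\Omega(\xi_1)]^T$; $K=Ab+\lambda b$ with $\lambda>0$; $\mathrm{dzv}_\ell$ applies componentwise a $C^1$ dead zone $\mathrm{dz}_\ell(x)$ equal to $0$ for $|x|\le\ell$ and to $x$ for $|x|\ge\ell+1$, with $\ell>\max_{\varrho\in P}|\theta(\varrho)|$. The system above is the zero dynamics (for output $e$) of the plant in closed loop with the controller $u=\xi_1+v$, $\dot\xi = A\xi+\phi(\xi_1)+\Omega(\xi_1)\hat\theta+H(X,\xi_1)v-M(X)\mathrm{dzv}_\ell(\hat\theta)$, $\dot{\hat\theta}=\beta(X,\xi_1)v-\mathrm{dzv}_\ell(\hat\theta)$, $\dot X=FX+G\Omega(\xi_1)$, $H=M(X)\beta+K$, written in coordinates $\tilde\theta=\hat\theta-\theta(\varrho)$, $\eta=\xi-M(X)\tilde\theta$, $\chi=\eta-\tau(\varrho,w,z)$; here $\tau_1$ is the first component of $\tau(\varrho,w,z)$, $\Delta(\chi_1,\tau_1,\theta)=\phi(\chi_1+\tau_1)-\phi(\chi_1)+[\Omega(\chi_1+\tau_1)-\Omega(\chi_1)]\theta(\varrho)$, and $\varphi(\varrho,w,z)=K(c-\tau_1)+A\tau+\phi(\tau_1)+\Omega(\tau_1)\theta(\varrho)-\frac{\partial\tau}{\partial z}f_0-\frac{\partial\tau}{\partial w}s$, which vanishes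 on $\mathcal{A}_0$. *)

theory Defs
  imports "HOL-Analysis.Analysis"
begin

definition C1_on :: "'a::real_normed_vector set \<Rightarrow> ('a \<Rightarrow> 'b::real_normed_vector) \<Rightarrow> bool" where
  "C1_on S f \<longleftrightarrow> (\<exists>f'. (\<forall>x\<in>S. (f has_derivative blinfun_apply (f' x)) (at x)) \<and> continuous_on S f')"

definition ode_sol :: "('a::real_normed_vector \<Rightarrow> 'a) \<Rightarrow> real set \<Rightarrow> (real \<Rightarrow> 'a) \<Rightarrow> bool" where
  "ode_sol f I x \<longleftrightarrow> (\<forall>t\<in>I. (x has_vector_derivative f (x t)) (at t within I))"

definition fwd_interval :: "real set \<Rightarrow> bool" where
  "fwd_interval I \<longleftrightarrow> is_interval I \<and> 0 \<in> I \<and> I \<subseteq> {0..}"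

definition invariant_set :: "('a::real_normed_vector \<Rightarrow> 'a) \<Rightarrow> 'a set \<Rightarrow> bool" where
  "invariant_set f S \<longleftrightarrow>
     (\<forall>I x. is_interval I \<and> ode_sol f I x \<and> (\<exists>t0\<in>I. x t0 \<in> S) \<longrightarrow> (\<forall>t\<in>I. x t \<in> S))"

definition omega_limit :: "('a::real_normed_vector \<Rightarrow> 'a) \<Rightarrow> 'a set \<Rightarrow> 'a set" where
  "omega_limit f B = {y. \<exists>tk xk. filterlim tk at_top sequentially \<and>
      (\<forall>k. xk k 0 \<in> B \<and> ode_sol f {0..} (xk k)) \<and> (\<lambda>k. xk k (tk k)) \<longlonglongrightarrow> y}"

definition C1_diffeo :: "'a::euclidean_space set \<Rightarrow> 'a set \<Rightarrow> ('a \<Rightarrow> 'a) \<Rightarrow> bool" where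
  "C1_diffeo U V \<psi> \<longleftrightarrow> open U \<and> open V \<and> bij_betw \<psi> U V \<and> C1_on U \<psi> \<and> C1_on V (inv_into U \<psi>)"

(* (C^1) differential submanifold with boundary: locally, after a C^1 change of
   coordinates, a relatively open piece of a linear subspace or of a half-subspace *)
definition submanifold_wb :: "'a::euclidean_space set \<Rightarrow> bool" where
  "submanifold_wb M \<longleftrightarrow>
     (\<forall>x\<in>M. \<exists>U V \<psi> (L::'a set) (l::'a \<Rightarrow> real).
        x \<in> U \<and> C1_diffeo U V \<psi> \<and> subspace L \<and> linear l \<and>
        \<psi> ` (U \<inter> M) = V \<inter> {y\<in>L. l y \<ge> 0})"

definition fbold :: "('p::real_normed_vector \<times> 'w \<Rightarrow> 'w) \<Rightarrow> ('p \<times> 'w \<times> 'z \<Rightarrow> 'z)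
     \<Rightarrow> 'p \<times> 'w \<times> 'z \<Rightarrow> 'p \<times> 'w \<times> 'z" where
  "fbold s f0 = (\<lambda>(\<rho>, w, z). (0, s (\<rho>, w), f0 (\<rho>, w, z)))"

(* Vectors of R^d are represented by functions nat => _, indices 0..d-1
   (index 0 = first component). *)

(* A v for the d x d upper shift matrix A *)
definition shiftA :: "nat \<Rightarrow> (nat \<Rightarrow> 'a::zero) \<Rightarrow> nat \<Rightarrow> 'a" where
  "shiftA d v i = (if i + 1 < d then v (i + 1) else 0)"

(* M(X) = col(0, X), rows of X indexed 0..d-2 *)
definition Mcol :: "(nat \<Rightarrow> 'a::zero) \<Rightarrow> nat \<Rightarrow> 'a" where
  "Mcol X i = (if i = 0 then 0 else X (i - 1))"

(* beta(X, xi1) = [C A M(X) + C Omega(xi1)]^T, rows of Omega(xi1) are Om xi1 i *)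
definition betav :: "nat \<Rightarrow> (nat \<Rightarrow> real^'q) \<Rightarrow> (real \<Rightarrow> nat \<Rightarrow> real^'q) \<Rightarrow> real \<Rightarrow> real^'q" where
  "betav d X Om xi1 = shiftA d (Mcol X) 0 + Om xi1 0"

(* entries of F (i,j < d-1) and of G (i < d-1, j < d) where b 0 = 1 and
   b 1, ..., b (d-1) stand for b_2, ..., b_d *)
definition FGmat :: "(nat \<Rightarrow> real) \<Rightarrow> nat \<Rightarrow> nat \<Rightarrow> real" where
  "FGmat b i j = (if j = 0 then - b (i + 1) else 0) + (if j = i + 1 then 1 else 0)"

(* K = A b + lambda b *)
definition Kvec :: "nat \<Rightarrow> (nat \<Rightarrow> real) \<Rightarrow> real \<Rightarrow> nat \<Rightarrow> real" where
  "Kvec d b lam i = shiftA d b i + lam * b i"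

definition dzv :: "(real \<Rightarrow> real) \<Rightarrow> real^'q \<Rightarrow> real^'q" where
  "dzv dz v = (\<chi> j. dz (v $ j))"

end

theory Submission
  imports Defs "HOL-Computational_Algebra.Polynomial"
begin

text \<open>Along a trajectory (\<rho>, w, z) stays in the compact set ZZ, so every term depending on it
  alone is bounded, and since \<phi> and \<Omega> have compact support so is the mismatch \<Delta>. In the
  coordinates \<zeta>_i = \<chi>_(i+1) - b_(i+1) \<chi>_0 the observer error satisfies \<zeta>' = F \<zeta> + (bounded),
  and likewise X' = F X + G \<Omega>. As F is the companion matrix of a Hurwitz polynomial with simple
  roots \<mu>, the left eigenvectors (\<mu>^(d-2), ..., \<mu>, 1) turn both into stable scalar equations
  y' = \<mu> y + g, so \<zeta> and X are bounded. For the remaining pair (\<chi>_0, th) the Lyapunov function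
  \<chi>_0^2 + |th|^2 works: the adaptation terms cancel, \<lambda> \<ge> 1 dominates the bounded input, and the
  dead zone gives -2 th \<bullet> dzv(th + \<theta>) \<le> -|th|^2 + C. Hence \<lambda>* = 1.\<close>

lemma C1_on_imp_continuous_on: "C1_on S f \<Longrightarrow> continuous_on S f"
  unfolding C1_on_def by (meson continuous_at_imp_continuous_on has_derivative_continuous)

lemma continuous_on_frechet_derivative_apply:
  assumes "C1_on U f" "K \<subseteq> U" "continuous_on K g"
  shows "continuous_on K (\<lambda>z. frechet_derivative f (at z) (g z))"
proof -
  obtain f' where f': "\<And>x. x \<in> U \<Longrightarrow> (f has_derivative blinfun_apply (f' x)) (at x)"
    and cont: "continuous_on U f'"
    using assms(1) unfolding C1_on_def by blast
  have "continuous_on K (\<lambda>z. blinfun_apply (f' z) (g z))"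
    using bounded_bilinear.continuous_on[OF bounded_bilinear_blinfun_apply
        continuous_on_subset[OF cont assms(2)] assms(3)] .
  moreover have "frechet_derivative f (at z) = blinfun_apply (f' z)" if "z \<in> K" for z
    using f' assms(2) that by (metis frechet_derivative_at subsetD)
  ultimately show ?thesis by (simp cong: continuous_on_cong)
qed

lemma finite_uniform_bound:
  fixes f :: "'i \<Rightarrow> 'a \<Rightarrow> real"
  assumes "finite J" and "\<And>j. j \<in> J \<Longrightarrow> \<exists>M. \<forall>a\<in>S. f j a \<le> M"
  shows "\<exists>M. \<forall>j\<in>J. \<forall>a\<in>S. f j a \<le> M"
proof -
  obtain M where M: "\<And>j a. j \<in> J \<Longrightarrow> a \<in> S \<Longrightarrow> f j a \<le> M j"
    using assms(2) by metis
  have "f j a \<le> (\<Sum>j\<in>J. \<bar>M j\<bar>)" if "j \<in> J" "a \<in> S" for j a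
    using M[OF that] member_le_sum[OF that(1), of "\<lambda>j. \<bar>M j\<bar>"] assms(1) by force
  then show ?thesis by blast
qed

lemma bounded_if_compact_support:
  fixes f :: "real \<Rightarrow> nat \<Rightarrow> 'a::real_normed_vector"
  assumes cont: "\<And>i. i < d \<Longrightarrow> continuous_on UNIV (\<lambda>x. f x i)"
    and support: "\<And>x i. R < \<bar>x\<bar> \<Longrightarrow> i < d \<Longrightarrow> f x i = 0"
  shows "\<exists>M. \<forall>i<d. \<forall>x. norm (f x i) \<le> M"
proof -
  have "\<exists>M. \<forall>x\<in>UNIV. norm (f x i) \<le> M" if i: "i < d" for i
  proof -
    have "bounded ((\<lambda>x. f x i) ` cball 0 R)"
      by (intro compact_imp_bounded compact_continuous_image continuous_on_subset[OF cont[OF i]]) auto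
    then obtain M where M: "\<And>x. x \<in> cball 0 R \<Longrightarrow> norm (f x i) \<le> M"
      unfolding bounded_iff by blast
    have "norm (f x i) \<le> max M 0" for x
      using M[of x] support[of x i] i by (cases "R < \<bar>x\<bar>") auto
    then show ?thesis by blast
  qed
  then have "\<exists>M. \<forall>i\<in>{..<d}. \<forall>x\<in>UNIV. norm (f x i) \<le> M"
    by (intro finite_uniform_bound) auto
  then show ?thesis by auto
qed

lemma differential_inequality_bound:
  fixes V V' :: "real \<Rightarrow> real"
  assumes I: "fwd_interval I" and t: "t \<in> I" and a: "a > 0"
    and der: "\<And>t. t \<in> I \<Longrightarrow> (V has_real_derivative V' t) (at t within I)"
    and le: "\<And>t. t \<in> I \<Longrightarrow> V' t \<le> - a * V t + c"
  shows "V t \<le> max (V 0) (c / a)"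
proof -
  have t0: "t \<ge> 0" and sub: "{0..t} \<subseteq> I"
    using I t by (auto simp: fwd_interval_def is_interval_1)
  define W where "W x = exp (a * x) * (V x - c / a)" for x
  define W' where "W' x = exp (a * x) * (a * (V x - c / a) + V' x)" for x
  have dW: "(W has_real_derivative W' x) (at x within {0..t})" if "x \<in> {0..t}" for x
  proof -
    have "(V has_real_derivative V' x) (at x within {0..t})"
      using DERIV_subset[OF der sub] sub that by auto
    then show ?thesis
      unfolding W_def W'_def by (auto intro!: derivative_eq_intros simp: algebra_simps)
  qed
  have W'_nonpos: "W' x \<le> 0" if "x \<in> {0..t}" for x
  proof -
    have "a * (V x - c / a) + V' x \<le> 0"
      using le[of x] sub that a by (auto simp: algebra_simps)
    then show ?thesis unfolding W'_def by (simp add: mult_nonneg_nonpos)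
  qed
  obtain x where x: "x \<in> {0..t}" "W t - W 0 = W' x * (t - 0)"
    using mvt_very_simple[of 0 t W "\<lambda>x h. W' x * h"] t0 dW
    by (force intro: has_field_derivative_imp_has_derivative[THEN has_derivative_eq_rhs]
        simp: mult.commute)
  then have decay: "exp (a * t) * (V t - c / a) \<le> V 0 - c / a"
    using mult_nonpos_nonneg[OF W'_nonpos[OF x(1)] t0] unfolding W_def by simp
  have "V t - c / a \<le> V 0 - c / a" if "V t > c / a"
  proof -
    have "1 * (V t - c / a) \<le> exp (a * t) * (V t - c / a)"
      using a t0 that by (intro mult_right_mono) auto
    then show ?thesis using decay by simp
  qed
  then show ?thesis by force
qed

section \<open>Lagrange interpolation\<close>

definition lagrange_basis :: "'a::field set \<Rightarrow> 'a \<Rightarrow> 'a poly" where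
  "lagrange_basis R \<mu> = smult (inverse (\<Prod>\<nu>\<in>R - {\<mu>}. \<mu> - \<nu>)) (\<Prod>\<nu>\<in>R - {\<mu>}. [:-\<nu>, 1:])"

lemma poly_lagrange_basis:
  assumes "finite R" "\<mu> \<in> R" "\<nu> \<in> R"
  shows "poly (lagrange_basis R \<mu>) \<nu> = (if \<nu> = \<mu> then 1 else 0)"
proof -
  have "(\<Prod>\<kappa>\<in>R - {\<mu>}. \<mu> - \<kappa>) \<noteq> 0" using assms by simp
  moreover have "(\<Prod>\<kappa>\<in>R - {\<mu>}. \<nu> - \<kappa>) = 0" if "\<nu> \<noteq> \<mu>"
    using assms that by (subst prod_zero_iff) auto
  ultimately show ?thesis by (auto simp: lagrange_basis_def poly_prod)
qed

lemma degree_lagrange_basis: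
  assumes "finite R" "\<mu> \<in> R"
  shows "degree (lagrange_basis R \<mu>) < card R"
proof -
  have "degree (lagrange_basis R \<mu>) \<le> degree (\<Prod>\<nu>\<in>R - {\<mu>}. [:-\<nu>, 1:])"
    unfolding lagrange_basis_def by (rule degree_smult_le)
  also have "\<dots> \<le> sum (degree \<circ> (\<lambda>\<nu>. [:-\<nu>, 1:])) (R - {\<mu>})"
    using assms by (intro degree_prod_sum_le) auto
  also have "\<dots> < card R"
    using assms card_gt_0_iff[of R] by auto
  finally show ?thesis .
qed

lemma lagrange_interpolation:
  assumes "finite R" "degree p < card R"
  shows "p = (\<Sum>\<mu>\<in>R. smult (poly p \<mu>) (lagrange_basis R \<mu>))"
proof (rule poly_eqI_degree[of R])
  fix \<nu> assume "\<nu> \<in> R"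
  then show "poly p \<nu> = poly (\<Sum>\<mu>\<in>R. smult (poly p \<mu>) (lagrange_basis R \<mu>)) \<nu>"
    using assms by (simp add: poly_sum poly_lagrange_basis if_distrib cong: if_cong)
next
  show "degree (\<Sum>\<mu>\<in>R. smult (poly p \<mu>) (lagrange_basis R \<mu>)) < card R"
    using assms degree_lagrange_basis
    by (intro degree_sum_less) (auto intro: le_less_trans[OF degree_smult_le])
qed (use assms in auto)

lemma vandermonde_left_inverse:
  fixes c :: "nat \<Rightarrow> 'a::field"
  assumes "finite R" "card R = m" "k < m"
  shows "c k = (\<Sum>\<mu>\<in>R. (\<Sum>j<m. \<mu> ^ (m - 1 - j) * c j) * coeff (lagrange_basis R \<mu>) (m - 1 - k))"
proof -
  define p where "p = (\<Sum>j<m. monom (c j) (m - 1 - j))"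
  have "coeff p (m - 1 - k) = (\<Sum>j<m. if j = k then c j else 0)"
    unfolding p_def coeff_sum coeff_monom using assms(3) by (intro sum.cong) auto
  then have "c k = coeff p (m - 1 - k)" using assms(3) by simp
  also have "p = (\<Sum>\<mu>\<in>R. smult (poly p \<mu>) (lagrange_basis R \<mu>))"
  proof (rule lagrange_interpolation)
    have "degree p \<le> m - 1"
      unfolding p_def by (intro degree_sum_le) (auto intro: order.trans[OF degree_monom_le])
    then show "degree p < card R" using assms by simp
  qed fact
  finally show ?thesis
    by (simp add: coeff_sum p_def poly_sum poly_monom mult.commute)
qed

lemma bounded_if_vandermonde_projections_bounded:
  fixes x :: "'t \<Rightarrow> nat \<Rightarrow> real"
  assumes fin: "finite R" and card: "card R = m"
    and y: "\<And>\<mu>. \<mu> \<in> R \<Longrightarrow> \<exists>B. \<forall>t\<in>T. cmod (\<Sum>k<m. \<mu> ^ (m - 1 - k) * of_real (x t k)) \<le> B"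
  shows "\<exists>B. \<forall>t\<in>T. \<forall>i<m. \<bar>x t i\<bar> \<le> B"
proof -
  define y where "y \<mu> t = (\<Sum>k<m. \<mu> ^ (m - 1 - k) * of_real (x t k))" for \<mu> :: complex and t
  obtain B where B: "\<And>\<mu> t. \<mu> \<in> R \<Longrightarrow> t \<in> T \<Longrightarrow> cmod (y \<mu> t) \<le> B \<mu>"
    using y unfolding y_def by metis
  define L where "L \<mu> i = coeff (lagrange_basis R \<mu>) (m - 1 - i)" for \<mu> i
  have "\<bar>x t i\<bar> \<le> (\<Sum>k<m. \<Sum>\<mu>\<in>R. \<bar>B \<mu>\<bar> * cmod (L \<mu> k))" if t: "t \<in> T" and i: "i < m" for t i
  proof -
    have "\<bar>x t i\<bar> = cmod (of_real (x t i) :: complex)" by simp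
    also have "of_real (x t i) = (\<Sum>\<mu>\<in>R. y \<mu> t * L \<mu> i)"
      using vandermonde_left_inverse[OF fin card i, of "\<lambda>j. of_real (x t j)"]
      by (simp add: y_def L_def)
    also have "cmod \<dots> \<le> (\<Sum>\<mu>\<in>R. cmod (y \<mu> t * L \<mu> i))" by (rule norm_sum)
    also have "\<dots> \<le> (\<Sum>\<mu>\<in>R. \<bar>B \<mu>\<bar> * cmod (L \<mu> i))"
    proof (rule sum_mono)
      fix \<mu> assume "\<mu> \<in> R"
      then have "cmod (y \<mu> t) \<le> \<bar>B \<mu>\<bar>" using B[OF _ t] by (meson abs_ge_self order.trans)
      then show "cmod (y \<mu> t * L \<mu> i) \<le> \<bar>B \<mu>\<bar> * cmod (L \<mu> i)"
        by (simp add: norm_mult mult_right_mono)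
    qed
    also have "\<dots> \<le> (\<Sum>k<m. \<Sum>\<mu>\<in>R. \<bar>B \<mu>\<bar> * cmod (L \<mu> k))"
      using i by (intro member_le_sum) (auto intro!: sum_nonneg)
    finally show ?thesis .
  qed
  then show ?thesis by blast
qed

section \<open>Companion systems with simple Hurwitz spectrum\<close>

text \<open>The roots of the characteristic polynomial of the companion matrix F with entries
  FGmat b i j, i, j < m.\<close>

definition companion_roots :: "(nat \<Rightarrow> real) \<Rightarrow> nat \<Rightarrow> complex set" where
  "companion_roots b m = {\<mu>. \<mu> ^ m + (\<Sum>j\<in>{1..m}. of_real (b j) * \<mu> ^ (m - j)) = 0}"

definition simple_hurwitz :: "(nat \<Rightarrow> real) \<Rightarrow> nat \<Rightarrow> bool" where
  "simple_hurwitz b m \<longleftrightarrow> finite (companion_roots b m) \<and> card (companion_roots b m) = m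
     \<and> (\<forall>\<mu>\<in>companion_roots b m. Re \<mu> < 0)"

lemma sum_FGmat_row:
  fixes x :: "nat \<Rightarrow> 'a::real_vector"
  assumes "i < m"
  shows "(\<Sum>j<m. FGmat b i j *\<^sub>R x j) = - b (i + 1) *\<^sub>R x 0 + (if i + 1 < m then x (i + 1) else 0)"
proof -
  have "(\<Sum>j<m. FGmat b i j *\<^sub>R x j)
      = (\<Sum>j<m. if j = 0 then - b (i + 1) *\<^sub>R x j else 0) + (\<Sum>j<m. if j = i + 1 then x j else 0)"
    unfolding FGmat_def sum.distrib[symmetric] by (intro sum.cong) (auto simp: scaleR_add_left)
  then show ?thesis using assms by (simp add: sum.delta)
qed

lemma companion_left_eigenvector:
  fixes x :: "nat \<Rightarrow> real"
  assumes "\<mu> \<in> companion_roots b m"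
  shows "(\<Sum>i<m. \<mu> ^ (m - 1 - i) * of_real (\<Sum>j<m. FGmat b i j * x j))
       = \<mu> * (\<Sum>k<m. \<mu> ^ (m - 1 - k) * of_real (x k))"
proof (cases m)
  case (Suc n)
  have "(\<Sum>j\<in>{1..m}. of_real (b j) * \<mu> ^ (m - j)) = (\<Sum>i<m. of_real (b (i + 1)) * \<mu> ^ (n - i))"
    by (subst image_Suc_lessThan[symmetric]) (simp add: sum.reindex Suc)
  then have root: "(\<Sum>i<m. of_real (b (i + 1)) * \<mu> ^ (n - i)) = - (\<mu> ^ m)"
    using assms unfolding companion_roots_def by (simp add: add_eq_0_iff2)
  have "(\<Sum>i<m. \<mu> ^ (m - 1 - i) * of_real (\<Sum>j<m. FGmat b i j * x j))
      = (\<Sum>i<m. - of_real (x 0) * (of_real (b (i + 1)) * \<mu> ^ (n - i))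
                + (if i < n then \<mu> ^ (n - i) * of_real (x (i + 1)) else 0))"
  proof (intro sum.cong refl)
    fix i assume "i \<in> {..<m}"
    then have row: "(\<Sum>j<m. FGmat b i j * x j) = - b (i + 1) * x 0 + (if i < n then x (i + 1) else 0)"
      using sum_FGmat_row[of i m b x] Suc by simp
    show "\<mu> ^ (m - 1 - i) * of_real (\<Sum>j<m. FGmat b i j * x j)
        = - of_real (x 0) * (of_real (b (i + 1)) * \<mu> ^ (n - i))
          + (if i < n then \<mu> ^ (n - i) * of_real (x (i + 1)) else 0)"
      unfolding row using Suc by (simp add: algebra_simps)
  qed
  also have "\<dots> = - of_real (x 0) * (\<Sum>i<m. of_real (b (i + 1)) * \<mu> ^ (n - i))
      + (\<Sum>i<m. if i < n then \<mu> ^ (n - i) * of_real (x (i + 1)) else 0)"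
    by (simp only: sum.distrib sum_distrib_left)
  also have "\<dots> = \<mu> ^ m * of_real (x 0) + (\<Sum>i<n. \<mu> ^ (n - i) * of_real (x (i + 1)))"
    unfolding root using Suc by (simp add: sum.lessThan_Suc)
  also have "\<dots> = \<mu> * (\<Sum>k<m. \<mu> ^ (m - 1 - k) * of_real (x k))"
  proof -
    have "\<mu> * (\<Sum>k<n. \<mu> ^ (n - Suc k) * of_real (x (Suc k))) = (\<Sum>i<n. \<mu> ^ (n - i) * of_real (x (i + 1)))"
      unfolding sum_distrib_left
      by (intro sum.cong refl) (simp add: Suc_diff_Suc power_Suc[symmetric] mult.assoc)
    then show ?thesis
      unfolding Suc sum.lessThan_Suc_shift by (simp add: distrib_left mult.assoc)
  qed
  finally show ?thesis .
qed simp

lemma stable_linear_ode_bounded: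
  fixes y g :: "real \<Rightarrow> complex"
  assumes I: "fwd_interval I" and \<mu>: "Re \<mu> < 0"
    and der: "\<And>t. t \<in> I \<Longrightarrow> (y has_vector_derivative \<mu> * y t + g t) (at t within I)"
    and g: "\<And>t. t \<in> I \<Longrightarrow> cmod (g t) \<le> G"
  shows "\<exists>B. \<forall>t\<in>I. cmod (y t) \<le> B"
proof -
  define \<alpha> where "\<alpha> = - Re \<mu>"
  have \<alpha>: "\<alpha> > 0" using \<mu> by (simp add: \<alpha>_def)
  have dV: "((\<lambda>t. y t \<bullet> y t) has_real_derivative 2 * (y t \<bullet> (\<mu> * y t + g t))) (at t within I)"
    if "t \<in> I" for t
    using bounded_bilinear.has_vector_derivative[OF bounded_bilinear_inner der[OF that] der[OF that]]
    by (simp add: has_real_derivative_iff_has_vector_derivative inner_commute)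
  have "2 * (y t \<bullet> (\<mu> * y t + g t)) \<le> - \<alpha> * (y t \<bullet> y t) + G\<^sup>2 / \<alpha>" if "t \<in> I" for t
  proof -
    have "y t \<bullet> (\<mu> * y t) = - \<alpha> * (y t \<bullet> y t)"
      by (simp add: \<alpha>_def inner_complex_def algebra_simps)
    moreover have "y t \<bullet> g t \<le> cmod (y t) * G"
      using Cauchy_Schwarz_ineq2[of "y t" "g t"] abs_ge_self[of "y t \<bullet> g t"]
        mult_left_mono[OF g[OF that] norm_ge_zero[of "y t"]] by linarith
    moreover have "2 * (cmod (y t) * G) \<le> \<alpha> * (y t \<bullet> y t) + G\<^sup>2 / \<alpha>"
    proof -
      have "0 \<le> (\<alpha> * cmod (y t) - G)\<^sup>2 / \<alpha>" using \<alpha> by simp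
      also have "\<dots> = \<alpha> * (y t \<bullet> y t) - 2 * (cmod (y t) * G) + G\<^sup>2 / \<alpha>"
        using \<alpha> by (simp add: power2_eq_square field_simps flip: power2_norm_eq_inner)
      finally show ?thesis by simp
    qed
    ultimately show ?thesis by (simp add: inner_add_right)
  qed
  then have "y t \<bullet> y t \<le> max (y 0 \<bullet> y 0) (G\<^sup>2 / \<alpha> / \<alpha>)" if "t \<in> I" for t
    using differential_inequality_bound[OF I that \<alpha> dV] by blast
  then have "cmod (y t) \<le> sqrt (max (y 0 \<bullet> y 0) (G\<^sup>2 / \<alpha> / \<alpha>))" if "t \<in> I" for t
    using that by (simp add: norm_eq_sqrt_inner)
  then show ?thesis by blast
qed

text \<open>The row vectors (\<mu>^(m-1), ..., \<mu>, 1) for the m distinct roots \<mu> are left eigenvectors of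
  the companion matrix; along them the system decouples into stable scalar equations, and the
  Vandermonde matrix they form is invertible.\<close>

lemma companion_system_bounded:
  fixes x v :: "real \<Rightarrow> nat \<Rightarrow> real"
  assumes I: "fwd_interval I" and b: "simple_hurwitz b m"
    and der: "\<And>t i. t \<in> I \<Longrightarrow> i < m \<Longrightarrow>
      ((\<lambda>t. x t i) has_real_derivative (\<Sum>j<m. FGmat b i j * x t j) + v t i) (at t within I)"
    and v: "\<And>t i. t \<in> I \<Longrightarrow> i < m \<Longrightarrow> \<bar>v t i\<bar> \<le> c"
  shows "\<exists>B. \<forall>t\<in>I. \<forall>i<m. \<bar>x t i\<bar> \<le> B"
proof -
  define R where "R = companion_roots b m"
  define y where "y \<mu> t = (\<Sum>k<m. \<mu> ^ (m - 1 - k) * of_real (x t k))" for \<mu> :: complex and t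
  define g where "g \<mu> t = (\<Sum>k<m. \<mu> ^ (m - 1 - k) * of_real (v t k))" for \<mu> :: complex and t
  have "\<exists>B. \<forall>t\<in>I. cmod (y \<mu> t) \<le> B" if \<mu>: "\<mu> \<in> R" for \<mu>
  proof (rule stable_linear_ode_bounded[OF I, where g = "g \<mu>" and G = "\<Sum>k<m. cmod \<mu> ^ (m - 1 - k) * c"])
    show "Re \<mu> < 0" using b \<mu> by (simp add: simple_hurwitz_def R_def)
  next
    fix t assume t: "t \<in> I"
    have "(y \<mu> has_vector_derivative
        (\<Sum>k<m. \<mu> ^ (m - 1 - k) * of_real ((\<Sum>j<m. FGmat b k j * x t j) + v t k))) (at t within I)"
      unfolding y_def using der t by (auto intro!: derivative_eq_intros)
    then show "(y \<mu> has_vector_derivative \<mu> * y \<mu> t + g \<mu> t) (at t within I)"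
      using companion_left_eigenvector[of \<mu> b m "x t"] \<mu>
      by (simp add: y_def g_def R_def sum.distrib distrib_left)
    show "cmod (g \<mu> t) \<le> (\<Sum>k<m. cmod \<mu> ^ (m - 1 - k) * c)"
      unfolding g_def using v t
      by (auto intro!: order.trans[OF norm_sum] sum_mono mult_left_mono simp: norm_mult norm_power)
  qed
  moreover have "finite R" "card R = m"
    using b by (simp_all add: simple_hurwitz_def R_def)
  ultimately show ?thesis
    unfolding y_def using bounded_if_vandermonde_projections_bounded by blast
qed

lemma companion_system_bounded_vec:
  fixes X g :: "real \<Rightarrow> nat \<Rightarrow> real^'q"
  assumes I: "fwd_interval I" and b: "simple_hurwitz b m"
    and der: "\<And>t i. t \<in> I \<Longrightarrow> i < m \<Longrightarrow>
      ((\<lambda>t. X t i) has_vector_derivative (\<Sum>j<m. FGmat b i j *\<^sub>R X t j) + g t i) (at t within I)"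
    and g: "\<And>t i. t \<in> I \<Longrightarrow> i < m \<Longrightarrow> norm (g t i) \<le> c"
  shows "\<exists>B. \<forall>t\<in>I. \<forall>i<m. norm (X t i) \<le> B"
proof -
  have "\<exists>B. \<forall>t\<in>I. \<forall>i<m. \<bar>X t i $ k\<bar> \<le> B" for k
  proof (rule companion_system_bounded[OF I b])
    fix t i assume "t \<in> I" "i < m"
    from bounded_linear.has_vector_derivative[OF bounded_linear_vec_nth der[OF this], of k]
    show "((\<lambda>t. X t i $ k) has_real_derivative (\<Sum>j<m. FGmat b i j * X t j $ k) + g t i $ k)
        (at t within I)"
      by (simp add: has_real_derivative_iff_has_vector_derivative)
    show "\<bar>g t i $ k\<bar> \<le> c"
      using component_le_norm_cart g[OF \<open>t \<in> I\<close> \<open>i < m\<close>] by (rule order.trans)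
  qed
  then obtain B where B: "\<And>k t i. t \<in> I \<Longrightarrow> i < m \<Longrightarrow> \<bar>X t i $ k\<bar> \<le> B k"
    by metis
  have "norm (X t i) \<le> (\<Sum>k\<in>UNIV. B k)" if "t \<in> I" "i < m" for t i
    using norm_le_l1_cart[of "X t i"] B[OF that] by (meson order.trans sum_mono)
  then show ?thesis by blast
qed

section \<open>The adaptive loop\<close>

lemma dead_zone_bound:
  fixes dz :: "real \<Rightarrow> real"
  assumes bounded: "\<And>y. \<bar>y\<bar> \<le> ell + 1 \<Longrightarrow> \<bar>dz y\<bar> \<le> Md"
    and identity: "\<And>y. ell + 1 \<le> \<bar>y\<bar> \<Longrightarrow> dz y = y"
  shows "\<exists>C. \<forall>a c. \<bar>c\<bar> \<le> ell \<longrightarrow> - 2 * (a * dz (a + c)) \<le> - a\<^sup>2 + C"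
proof (intro exI allI impI)
  fix a c :: real assume c: "\<bar>c\<bar> \<le> ell"
  show "- 2 * (a * dz (a + c)) \<le> - a\<^sup>2 + (ell\<^sup>2 + (2 * ell + 1)\<^sup>2 + 2 * (2 * ell + 1) * \<bar>Md\<bar>)"
  proof (cases "ell + 1 \<le> \<bar>a + c\<bar>")
    case True
    have "- 2 * (a * dz (a + c)) = - a\<^sup>2 + c\<^sup>2 - (a + c)\<^sup>2"
      using identity[OF True] by (simp add: power2_eq_square algebra_simps)
    moreover have "c\<^sup>2 \<le> ell\<^sup>2" using power_mono[OF c abs_ge_zero, of 2] by simp
    moreover have "0 \<le> 2 * (2 * ell + 1) * \<bar>Md\<bar>" using c by simp
    ultimately show ?thesis using zero_le_power2[of "a + c"] zero_le_power2[of "2 * ell + 1"] by linarith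
  next
    case False
    have a: "\<bar>a\<bar> \<le> 2 * ell + 1" using False c by linarith
    have "\<bar>dz (a + c)\<bar> \<le> \<bar>Md\<bar>" using bounded[of "a + c"] False by linarith
    then have "\<bar>a\<bar> * \<bar>dz (a + c)\<bar> \<le> (2 * ell + 1) * \<bar>Md\<bar>"
      using a by (intro mult_mono) auto
    then have "- 2 * (a * dz (a + c)) \<le> 2 * ((2 * ell + 1) * \<bar>Md\<bar>)"
      using abs_ge_minus_self[of "a * dz (a + c)"] unfolding abs_mult by linarith
    moreover have "a\<^sup>2 \<le> (2 * ell + 1)\<^sup>2" using power_mono[OF a abs_ge_zero, of 2] by simp
    ultimately show ?thesis using zero_le_power2[of ell] by linarith
  qed
qed

lemma dead_zone_vector_bound:
  fixes dz :: "real \<Rightarrow> real"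
  assumes "\<And>y. \<bar>y\<bar> \<le> ell + 1 \<Longrightarrow> \<bar>dz y\<bar> \<le> Md" and "\<And>y. ell + 1 \<le> \<bar>y\<bar> \<Longrightarrow> dz y = y"
  shows "\<exists>C. \<forall>(v::real^'q) c. norm c \<le> ell \<longrightarrow> - 2 * (v \<bullet> dzv dz (v + c)) \<le> - (v \<bullet> v) + C"
proof -
  obtain C where C: "\<And>a c. \<bar>c\<bar> \<le> ell \<Longrightarrow> - 2 * (a * dz (a + c)) \<le> - a\<^sup>2 + C"
    using dead_zone_bound[OF assms] by blast
  have "- 2 * (v \<bullet> dzv dz (v + c)) \<le> - (v \<bullet> v) + CARD('q) * C"
    if "norm c \<le> ell" for v c :: "real^'q"
  proof -
    have "- 2 * (v \<bullet> dzv dz (v + c)) = (\<Sum>k\<in>UNIV. - 2 * (v $ k * dz (v $ k + c $ k)))"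
      by (simp add: inner_vec_def dzv_def sum_distrib_left)
    also have "\<dots> \<le> (\<Sum>k\<in>UNIV. - (v $ k)\<^sup>2 + C)"
      using C component_le_norm_cart[of c] that by (intro sum_mono) (meson order.trans)
    also have "\<dots> = - (v \<bullet> v) + CARD('q) * C"
      by (simp add: inner_vec_def sum_subtractf power2_eq_square)
    finally show ?thesis .
  qed
  then show ?thesis by blast
qed

lemma adaptive_loop_bounded:
  fixes e r :: "real \<Rightarrow> real" and th c \<beta> :: "real \<Rightarrow> real^'q"
  assumes I: "fwd_interval I" and lam: "lam \<ge> 1"
    and de: "\<And>t. t \<in> I \<Longrightarrow> (e has_real_derivative - lam * e t + \<beta> t \<bullet> th t + r t) (at t within I)"
    and dth: "\<And>t. t \<in> I \<Longrightarrow>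
      (th has_vector_derivative - (e t *\<^sub>R \<beta> t) - dzv dz (th t + c t)) (at t within I)"
    and r: "\<And>t. t \<in> I \<Longrightarrow> \<bar>r t\<bar> \<le> Rb"
    and c: "\<And>t. t \<in> I \<Longrightarrow> norm (c t) \<le> ell"
    and dz_bounded: "\<And>y. \<bar>y\<bar> \<le> ell + 1 \<Longrightarrow> \<bar>dz y\<bar> \<le> Md"
    and dz_identity: "\<And>y. ell + 1 \<le> \<bar>y\<bar> \<Longrightarrow> dz y = y"
  shows "\<exists>B. \<forall>t\<in>I. \<bar>e t\<bar> \<le> B \<and> norm (th t) \<le> B"
proof -
  obtain C where C: "\<And>v c :: real^'q. norm c \<le> ell \<Longrightarrow>
      - 2 * (v \<bullet> dzv dz (v + c)) \<le> - (v \<bullet> v) + C"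
    using dead_zone_vector_bound[OF dz_bounded dz_identity] by blast
  define V where "V t = (e t)\<^sup>2 + th t \<bullet> th t" for t
  define V' where "V' t = 2 * (e t * (- lam * e t)) + 2 * (e t * r t) - 2 * (th t \<bullet> dzv dz (th t + c t))" for t
  \<comment> \<open>the coupling terms e (\<beta> \<bullet> th) of the two equations cancel in V'\<close>
  have dV: "(V has_real_derivative V' t) (at t within I)" if "t \<in> I" for t
    unfolding V_def[abs_def] V'_def using DERIV_add[OF DERIV_power[OF de[OF that], of 2]
        bounded_bilinear.has_vector_derivative[OF bounded_bilinear_inner dth[OF that] dth[OF that],
          unfolded has_real_derivative_iff_has_vector_derivative[symmetric]]]
    by (simp add: inner_diff_right inner_commute algebra_simps)
  have V'_le: "V' t \<le> - 1 * V t + (Rb\<^sup>2 + C)" if t: "t \<in> I" for t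
  proof -
    have "(e t)\<^sup>2 \<le> lam * (e t)\<^sup>2" using mult_right_mono[OF lam zero_le_power2[of "e t"]] by simp
    then have "2 * (e t * (- lam * e t)) \<le> - 2 * (e t)\<^sup>2" by (simp add: power2_eq_square algebra_simps)
    moreover have "2 * (e t * r t) \<le> (e t)\<^sup>2 + Rb\<^sup>2"
    proof -
      have "2 * (e t * r t) \<le> (e t)\<^sup>2 + (r t)\<^sup>2" using sum_squares_bound[of "e t" "r t"] by simp
      moreover have "(r t)\<^sup>2 \<le> Rb\<^sup>2" using power_mono[OF r[OF t] abs_ge_zero, of 2] by simp
      ultimately show ?thesis by linarith
    qed
    ultimately show ?thesis using C[of "c t" "th t", OF c[OF t]] unfolding V_def V'_def by (simp add: algebra_simps)
  qed
  define M where "M = max (V 0) (Rb\<^sup>2 + C)"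
  have V: "V t \<le> M" if "t \<in> I" for t
    using differential_inequality_bound[OF I that zero_less_one dV V'_le] by (simp add: M_def)
  have "\<bar>e t\<bar> \<le> sqrt M \<and> norm (th t) \<le> sqrt M" if "t \<in> I" for t
  proof -
    have "(e t)\<^sup>2 \<le> M" "th t \<bullet> th t \<le> M"
      using V[OF that] inner_ge_zero[of "th t"] zero_le_power2[of "e t"] unfolding V_def by linarith+
    then show ?thesis by (simp add: real_le_rsqrt norm_eq_sqrt_inner)
  qed
  then show ?thesis by blast
qed

section \<open>The error system\<close>

text \<open>In the coordinates \<zeta>_i = \<chi>_(i+1) - b_(i+1) \<chi>_0 the observer error is driven by the
  companion matrix F, and the adaptation term b (\<beta> \<bullet> th) drops out because b_0 = 1.\<close>

lemma error_coordinates_equation: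
  fixes x w :: "nat \<Rightarrow> real"
  assumes i: "i + 1 < d" and b0: "b 0 = 1"
  shows "(shiftA d x (i + 1) - Kvec d b lam (i + 1) * x 0 + b (i + 1) * u + w (i + 1))
       - b (i + 1) * (shiftA d x 0 - Kvec d b lam 0 * x 0 + b 0 * u + w 0)
     = (\<Sum>j<d - 1. FGmat b i j * (x (j + 1) - b (j + 1) * x 0)) + (w (i + 1) - b (i + 1) * w 0)"
proof -
  have "(\<Sum>j<d - 1. FGmat b i j * (x (j + 1) - b (j + 1) * x 0))
      = - b (i + 1) * (x 1 - b 1 * x 0) + (if i + 2 < d then x (i + 2) - b (i + 2) * x 0 else 0)"
    using sum_FGmat_row[of i "d - 1" b "\<lambda>j. x (j + 1) - b (j + 1) * x 0"] i by (simp add: less_diff_conv)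
  then show ?thesis
    using i b0 by (simp add: shiftA_def Kvec_def algebra_simps)
qed

lemma error_coordinates_bounded:
  fixes chi w :: "real \<Rightarrow> nat \<Rightarrow> real" and th \<beta> :: "real \<Rightarrow> real^'q"
  assumes I: "fwd_interval I" and b: "simple_hurwitz b (d - 1)" and b0: "b 0 = 1"
    and dchi: "\<And>t i. t \<in> I \<Longrightarrow> i < d \<Longrightarrow> ((\<lambda>t. chi t i) has_real_derivative
      shiftA d (chi t) i - Kvec d b lam i * chi t 0 + b i * (\<beta> t \<bullet> th t) + w t i) (at t within I)"
    and w: "\<And>t i. t \<in> I \<Longrightarrow> i < d \<Longrightarrow> \<bar>w t i\<bar> \<le> Wb"
  shows "\<exists>B. \<forall>t\<in>I. \<forall>i<d - 1. \<bar>chi t (i + 1) - b (i + 1) * chi t 0\<bar> \<le> B"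
proof (rule companion_system_bounded[OF I b,
      where v = "\<lambda>t i. w t (i + 1) - b (i + 1) * w t 0" and c = "Wb + (\<Sum>j<d. \<bar>b j\<bar>) * Wb"])
  fix t i assume t: "t \<in> I" and i: "i < d - 1"
  have "((\<lambda>t. chi t (i + 1) - b (i + 1) * chi t 0) has_real_derivative
      (shiftA d (chi t) (i + 1) - Kvec d b lam (i + 1) * chi t 0 + b (i + 1) * (\<beta> t \<bullet> th t) + w t (i + 1))
      - b (i + 1) * (shiftA d (chi t) 0 - Kvec d b lam 0 * chi t 0 + b 0 * (\<beta> t \<bullet> th t) + w t 0))
      (at t within I)"
    using i t by (intro DERIV_diff DERIV_cmult dchi) auto
  moreover have "i + 1 < d" using i by linarith
  ultimately show "((\<lambda>t. chi t (i + 1) - b (i + 1) * chi t 0) has_real_derivative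
      (\<Sum>j<d - 1. FGmat b i j * (chi t (j + 1) - b (j + 1) * chi t 0))
      + (w t (i + 1) - b (i + 1) * w t 0)) (at t within I)"
    by (simp only: error_coordinates_equation[where b = b, OF _ b0])
  have "\<bar>b (i + 1)\<bar> \<le> (\<Sum>j<d. \<bar>b j\<bar>)"
    using i by (intro member_le_sum) auto
  then have "\<bar>b (i + 1) * w t 0\<bar> \<le> (\<Sum>j<d. \<bar>b j\<bar>) * Wb"
    unfolding abs_mult using w[OF t, of 0] i by (intro mult_mono) auto
  then show "\<bar>w t (i + 1) - b (i + 1) * w t 0\<bar> \<le> Wb + (\<Sum>j<d. \<bar>b j\<bar>) * Wb"
    using w[OF t, of "i + 1"] i by linarith
qed

lemma observer_error_bounded:
  fixes chi w :: "real \<Rightarrow> nat \<Rightarrow> real" and th c \<beta> :: "real \<Rightarrow> real^'q"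
  assumes I: "fwd_interval I" and d: "d \<ge> 1" and b: "simple_hurwitz b (d - 1)" and b0: "b 0 = 1"
    and lam: "lam \<ge> 1"
    and dchi: "\<And>t i. t \<in> I \<Longrightarrow> i < d \<Longrightarrow> ((\<lambda>t. chi t i) has_real_derivative
      shiftA d (chi t) i - Kvec d b lam i * chi t 0 + b i * (\<beta> t \<bullet> th t) + w t i) (at t within I)"
    and w: "\<And>t i. t \<in> I \<Longrightarrow> i < d \<Longrightarrow> \<bar>w t i\<bar> \<le> Wb"
    and dth: "\<And>t. t \<in> I \<Longrightarrow>
      (th has_vector_derivative - (chi t 0 *\<^sub>R \<beta> t) - dzv dz (th t + c t)) (at t within I)"
    and c: "\<And>t. t \<in> I \<Longrightarrow> norm (c t) \<le> ell"
    and dz_bounded: "\<And>y. \<bar>y\<bar> \<le> ell + 1 \<Longrightarrow> \<bar>dz y\<bar> \<le> Md"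
    and dz_identity: "\<And>y. ell + 1 \<le> \<bar>y\<bar> \<Longrightarrow> dz y = y"
  shows "\<exists>B. \<forall>t\<in>I. (\<forall>i<d. \<bar>chi t i\<bar> \<le> B) \<and> norm (th t) \<le> B"
proof -
  define \<zeta> where "\<zeta> t i = chi t (i + 1) - b (i + 1) * chi t 0" for t i
  obtain B\<zeta> where B\<zeta>: "\<And>t i. t \<in> I \<Longrightarrow> i < d - 1 \<Longrightarrow> \<bar>\<zeta> t i\<bar> \<le> B\<zeta>"
    using error_coordinates_bounded[OF I b b0 dchi w] unfolding \<zeta>_def by blast
  define r where "r t = shiftA d (chi t) 0 - shiftA d b 0 * chi t 0 + w t 0" for t
  have "\<exists>B. \<forall>t\<in>I. \<bar>chi t 0\<bar> \<le> B \<and> norm (th t) \<le> B"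
  proof (rule adaptive_loop_bounded[OF I lam _ dth _ c dz_bounded dz_identity, where r = r])
    fix t assume t: "t \<in> I"
    show "((\<lambda>t. chi t 0) has_real_derivative - lam * chi t 0 + \<beta> t \<bullet> th t + r t) (at t within I)"
      using dchi[OF t, of 0] d b0 by (simp add: r_def Kvec_def algebra_simps)
    have "r t = (if 1 < d then \<zeta> t 0 else 0) + w t 0"
      by (simp add: r_def shiftA_def \<zeta>_def)
    then show "\<bar>r t\<bar> \<le> \<bar>B\<zeta>\<bar> + Wb"
      using B\<zeta>[OF t, of 0] w[OF t, of 0] d by (auto split: if_splits)
  qed
  then obtain Be where Be: "\<And>t. t \<in> I \<Longrightarrow> \<bar>chi t 0\<bar> \<le> Be \<and> norm (th t) \<le> Be"
    by blast
  define Sb where "Sb = (\<Sum>j<d. \<bar>b j\<bar>)"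
  have Sb_nonneg: "0 \<le> Sb * \<bar>Be\<bar>" by (simp add: Sb_def sum_nonneg)
  have "\<bar>chi t i\<bar> \<le> Be + \<bar>B\<zeta>\<bar> + Sb * \<bar>Be\<bar>" if t: "t \<in> I" and i: "i < d" for t i
  proof (cases i)
    case 0
    then show ?thesis using conjunct1[OF Be[OF t]] Sb_nonneg abs_ge_zero[of B\<zeta>] by simp
  next
    case (Suc k)
    have "\<bar>b i\<bar> \<le> Sb" unfolding Sb_def using i by (intro member_le_sum) auto
    then have "\<bar>b i * chi t 0\<bar> \<le> Sb * \<bar>Be\<bar>"
      unfolding abs_mult using Be[OF t] by (intro mult_mono) auto
    moreover have "chi t i = \<zeta> t k + b i * chi t 0" by (simp add: \<zeta>_def Suc)
    moreover have "\<bar>\<zeta> t k\<bar> \<le> B\<zeta>" using B\<zeta>[OF t, of k] i Suc by simp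
    moreover have "0 \<le> Be" using Be[OF t] by linarith
    ultimately show ?thesis by linarith
  qed
  moreover have "norm (th t) \<le> Be + \<bar>B\<zeta>\<bar> + Sb * \<bar>Be\<bar>" if "t \<in> I" for t
    using conjunct2[OF Be[OF that]] Sb_nonneg abs_ge_zero[of B\<zeta>] by linarith
  ultimately show ?thesis by blast
qed

lemma filter_state_bounded:
  fixes X :: "real \<Rightarrow> nat \<Rightarrow> real^'q" and \<Omega> :: "real \<Rightarrow> nat \<Rightarrow> real^'q"
  assumes I: "fwd_interval I" and hurwitz: "simple_hurwitz b (d - 1)"
    and \<Omega>: "\<And>i x. i < d \<Longrightarrow> norm (\<Omega> x i) \<le> M\<Omega>"
    and dX: "\<And>t i. t \<in> I \<Longrightarrow> i < d - 1 \<Longrightarrow> ((\<lambda>t. X t i) has_vector_derivative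
      (\<Sum>j<d - 1. FGmat b i j *\<^sub>R X t j) + (\<Sum>j<d. FGmat b i j *\<^sub>R \<Omega> (a t) j)) (at t within I)"
  shows "\<exists>B. \<forall>t\<in>I. \<forall>i<d - 1. norm (X t i) \<le> B"
proof (rule companion_system_bounded_vec[OF I hurwitz dX])
  fix t i assume "t \<in> I" "i < d - 1"
  have "norm (\<Sum>j<d. FGmat b i j *\<^sub>R \<Omega> (a t) j) \<le> (\<Sum>j<d. \<bar>FGmat b i j\<bar> * M\<Omega>)"
    using \<Omega> by (auto intro!: order.trans[OF norm_sum] sum_mono mult_left_mono)
  also have "\<dots> \<le> (\<Sum>j<d. \<bar>FGmat b i j\<bar> * \<bar>M\<Omega>\<bar>)"
    by (intro sum_mono mult_left_mono) auto
  also have "\<dots> \<le> (\<Sum>k<d - 1. \<Sum>j<d. \<bar>FGmat b k j\<bar> * \<bar>M\<Omega>\<bar>)"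
    using \<open>i < d - 1\<close> by (intro member_le_sum) (auto intro!: sum_nonneg)
  finally show "norm (\<Sum>j<d. FGmat b i j *\<^sub>R \<Omega> (a t) j) \<le> (\<Sum>k<d - 1. \<Sum>j<d. \<bar>FGmat b k j\<bar> * \<bar>M\<Omega>\<bar>)" .
qed

lemma mismatch_bound:
  fixes \<phi> :: "real \<Rightarrow> real" and \<Omega> :: "real \<Rightarrow> 'a::real_inner"
  assumes "\<And>x. \<bar>\<phi> x\<bar> \<le> M\<phi>" and "\<And>x. norm (\<Omega> x) \<le> M\<Omega>" and "norm \<theta> \<le> ell"
  shows "\<bar>\<phi> (x + y) - \<phi> x + (\<Omega> (x + y) - \<Omega> x) \<bullet> \<theta>\<bar> \<le> 2 * M\<phi> + 2 * M\<Omega> * ell"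
proof -
  have "\<bar>(\<Omega> (x + y) - \<Omega> x) \<bullet> \<theta>\<bar> \<le> norm (\<Omega> (x + y) - \<Omega> x) * norm \<theta>"
    by (rule Cauchy_Schwarz_ineq2)
  also have "\<dots> \<le> (2 * M\<Omega>) * ell"
  proof (rule mult_mono)
    show "norm (\<Omega> (x + y) - \<Omega> x) \<le> 2 * M\<Omega>"
      using assms(2)[of "x + y"] assms(2)[of x] norm_triangle_ineq4[of "\<Omega> (x + y)" "\<Omega> x"] by linarith
    show "0 \<le> 2 * M\<Omega>" using assms(2)[of x] norm_ge_zero[of "\<Omega> x"] by linarith
  qed (use assms(3) in auto)
  finally show ?thesis using assms(1)[of "x + y"] assms(1)[of x] by linarith
qed

lemma error_system_bounded:
  fixes chi :: "real \<Rightarrow> nat \<Rightarrow> real" and th c :: "real \<Rightarrow> real^'q"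
    and X :: "real \<Rightarrow> nat \<Rightarrow> real^'q" and \<Omega> :: "real \<Rightarrow> nat \<Rightarrow> real^'q"
  assumes I: "fwd_interval I" and d: "d \<ge> 1" and hurwitz: "simple_hurwitz b (d - 1)"
    and b0: "b 0 = 1" and lam: "lam \<ge> 1"
    and K: "compact K" "\<And>t. t \<in> I \<Longrightarrow> z t \<in> K" and \<psi>: "\<And>i. i < d \<Longrightarrow> continuous_on K (\<psi> i)"
    and \<phi>: "\<And>i x. i < d \<Longrightarrow> \<bar>\<phi> x i\<bar> \<le> M\<phi>" and \<Omega>: "\<And>i x. i < d \<Longrightarrow> norm (\<Omega> x i) \<le> M\<Omega>"
    and c: "\<And>t. t \<in> I \<Longrightarrow> norm (c t) \<le> ell"
    and dz_bounded: "\<And>y. \<bar>y\<bar> \<le> ell + 1 \<Longrightarrow> \<bar>dz y\<bar> \<le> Md"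
    and dz_identity: "\<And>y. ell + 1 \<le> \<bar>y\<bar> \<Longrightarrow> dz y = y"
    and dchi: "\<And>t i. t \<in> I \<Longrightarrow> i < d \<Longrightarrow> ((\<lambda>t. chi t i) has_real_derivative
      shiftA d (chi t) i - Kvec d b lam i * chi t 0 + b i * (betav d (X t) \<Omega> (chi t 0 + y t) \<bullet> th t)
      + (\<phi> (chi t 0 + y t) i - \<phi> (chi t 0) i + (\<Omega> (chi t 0 + y t) i - \<Omega> (chi t 0) i) \<bullet> c t)
      + \<psi> i (z t)) (at t within I)"
    and dth: "\<And>t. t \<in> I \<Longrightarrow> (th has_vector_derivative
      - (chi t 0 *\<^sub>R betav d (X t) \<Omega> (chi t 0 + y t)) - dzv dz (th t + c t)) (at t within I)"
    and dX: "\<And>t i. t \<in> I \<Longrightarrow> i < d - 1 \<Longrightarrow> ((\<lambda>t. X t i) has_vector_derivative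
      (\<Sum>j<d - 1. FGmat b i j *\<^sub>R X t j) + (\<Sum>j<d. FGmat b i j *\<^sub>R \<Omega> (chi t 0 + y t) j)) (at t within I)"
  shows "\<exists>B. \<forall>t\<in>I. (\<forall>i<d. \<bar>chi t i\<bar> \<le> B) \<and> norm (th t) \<le> B \<and> (\<forall>i<d - 1. norm (X t i) \<le> B)"
proof -
  define w where "w t i = \<phi> (chi t 0 + y t) i - \<phi> (chi t 0) i
    + (\<Omega> (chi t 0 + y t) i - \<Omega> (chi t 0) i) \<bullet> c t + \<psi> i (z t)" for t i
  have "\<exists>M. \<forall>t\<in>I. \<bar>w t i\<bar> \<le> M" if i: "i < d" for i
  proof -
    have "bounded (\<psi> i ` K)"
      by (intro compact_imp_bounded compact_continuous_image \<psi> i K)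
    then obtain M\<psi> where M\<psi>: "\<And>x. x \<in> K \<Longrightarrow> \<bar>\<psi> i x\<bar> \<le> M\<psi>"
      unfolding bounded_iff by auto
    have "\<bar>w t i\<bar> \<le> 2 * M\<phi> + 2 * M\<Omega> * ell + M\<psi>" if "t \<in> I" for t
      using mismatch_bound[of "\<lambda>x. \<phi> x i" M\<phi> "\<lambda>x. \<Omega> x i" M\<Omega> "c t" ell "chi t 0" "y t",
          OF \<phi>[OF i] \<Omega>[OF i] c[OF that]] M\<psi>[OF K(2)[OF that]]
      unfolding w_def by (smt (verit) abs_triangle_ineq)
    then show ?thesis by blast
  qed
  then have "\<exists>M. \<forall>i\<in>{..<d}. \<forall>t\<in>I. \<bar>w t i\<bar> \<le> M"
    by (intro finite_uniform_bound) auto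
  then obtain Wb where Wb: "\<And>t i. t \<in> I \<Longrightarrow> i < d \<Longrightarrow> \<bar>w t i\<bar> \<le> Wb"
    by (meson lessThan_iff)
  have "\<exists>B. \<forall>t\<in>I. (\<forall>i<d. \<bar>chi t i\<bar> \<le> B) \<and> norm (th t) \<le> B"
    using dchi
    by (intro observer_error_bounded[where chi = chi and \<beta> = "\<lambda>t. betav d (X t) \<Omega> (chi t 0 + y t)",
          OF I d hurwitz b0 lam _ Wb dth c dz_bounded dz_identity])
      (simp add: w_def add.assoc)
  then obtain B1 where B1: "\<And>t. t \<in> I \<Longrightarrow> (\<forall>i<d. \<bar>chi t i\<bar> \<le> B1) \<and> norm (th t) \<le> B1"
    by blast
  obtain B2 where B2: "\<And>t i. t \<in> I \<Longrightarrow> i < d - 1 \<Longrightarrow> norm (X t i) \<le> B2"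
    using filter_state_bounded[where a = "\<lambda>t. chi t 0 + y t", OF I hurwitz \<Omega> dX] by blast
  have "(\<forall>i<d. \<bar>chi t i\<bar> \<le> max B1 B2) \<and> norm (th t) \<le> max B1 B2 \<and> (\<forall>i<d - 1. norm (X t i) \<le> max B1 B2)"
    if "t \<in> I" for t
    using B1[OF that] B2[OF that] by (simp add: le_max_iff_disj)
  then show ?thesis by blast
qed

lemma continuous_on_immersion_residual:
  fixes \<tau> :: "nat \<Rightarrow> 'a::real_normed_vector \<Rightarrow> real"
    and \<phi> :: "real \<Rightarrow> nat \<Rightarrow> real" and \<Omega> :: "real \<Rightarrow> nat \<Rightarrow> 'b::real_inner"
  assumes U: "K \<subseteq> U" "\<And>j. j < d \<Longrightarrow> C1_on U (\<tau> j)" and i: "i < d"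
    and "continuous_on K q" "continuous_on UNIV (\<lambda>x. \<phi> x i)" "continuous_on UNIV (\<lambda>x. \<Omega> x i)"
    and "continuous_on K \<eta>" and F: "continuous_on K F"
  shows "continuous_on K (\<lambda>z. k * (q z - \<tau> 0 z) + shiftA d (\<lambda>j. \<tau> j z) i + \<phi> (\<tau> 0 z) i
    + \<Omega> (\<tau> 0 z) i \<bullet> \<eta> z - frechet_derivative (\<tau> i) (at z) (F z))"
proof -
  have \<tau>: "continuous_on K (\<tau> j)" if "j < d" for j
    using C1_on_imp_continuous_on[OF U(2)[OF that]] U(1) by (rule continuous_on_subset)
  have "continuous_on K (\<lambda>z. shiftA d (\<lambda>j. \<tau> j z) i)"
    using \<tau> by (cases "i + 1 < d") (simp_all add: shiftA_def)
  moreover have "continuous_on K (\<lambda>z. \<phi> (\<tau> 0 z) i)" "continuous_on K (\<lambda>z. \<Omega> (\<tau> 0 z) i)"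
    using continuous_on_compose2[OF assms(5) \<tau>] continuous_on_compose2[OF assms(6) \<tau>] i by auto
  moreover have "continuous_on K (\<lambda>z. frechet_derivative (\<tau> i) (at z) (F z))"
    using continuous_on_frechet_derivative_apply[OF U(2)[OF i] U(1) F] .
  ultimately show ?thesis
    using \<tau>[of 0] assms(4,7) i by (intro continuous_intros) auto
qed

theorem lemma1:
  fixes s :: "'p::euclidean_space \<times> 'w::euclidean_space \<Rightarrow> 'w"
    and f0 :: "'p \<times> 'w \<times> 'z::euclidean_space \<Rightarrow> 'z"
    and qf :: "('p \<times> 'w \<times> 'z) \<times> real \<Rightarrow> real"
    and P :: "'p set" and W :: "'w set" and Z :: "'z set"
    and ZZ :: "('p \<times> 'w \<times> 'z) set"
    and d :: nat
    and \<tau> :: "nat \<Rightarrow> 'p \<times> 'w \<times> 'z \<Rightarrow> real"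
    and \<theta> :: "'p \<Rightarrow> real^'q"
    and \<phi> :: "real \<Rightarrow> nat \<Rightarrow> real"
    and \<Omega> :: "real \<Rightarrow> nat \<Rightarrow> real^'q"
    and b :: "nat \<Rightarrow> real"
    and ell :: real
    and dz :: "real \<Rightarrow> real"
  assumes "compact P" and "compact W" and "compact Z"
    and "C1_on UNIV s" and "C1_on UNIV f0" and "C1_on UNIV qf"
    \<comment> \<open>Assumption (i)\<close>
    and "submanifold_wb (P \<times> W)"
    and "invariant_set (\<lambda>(\<rho>, w). ((0::'p), s (\<rho>, w))) (P \<times> W)"
    \<comment> \<open>Assumption (ii)\<close>
    and "compact ZZ" and "ZZ \<subseteq> P \<times> W \<times> UNIV"
    and "\<forall>I x. fwd_interval I \<and> ode_sol (fbold s f0) I x \<and> x 0 \<in> P \<times> W \<times> Z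
               \<longrightarrow> (\<forall>t\<in>I. x t \<in> ZZ)"
    and "submanifold_wb (omega_limit (fbold s f0) (P \<times> W \<times> Z))"
    and "\<exists>d1>0. \<forall>zz \<in> P \<times> W \<times> UNIV.
            (\<exists>a\<in>omega_limit (fbold s f0) (P \<times> W \<times> Z). dist zz a \<le> d1) \<longrightarrow> zz \<in> P \<times> W \<times> Z"
    \<comment> \<open>Assumption (iv)\<close>
    and "d \<ge> 1"
    and "\<exists>U. open U \<and> ZZ \<subseteq> U \<and> (\<forall>i<d. C1_on U (\<tau> i))"
    and "continuous_on P \<theta>"
    and "\<forall>i<d. C1_on UNIV (\<lambda>x. \<phi> x i)" and "\<forall>i<d. C1_on UNIV (\<lambda>x. \<Omega> x i)"
    and "\<exists>R. \<forall>x. \<bar>x\<bar> > R \<longrightarrow> (\<forall>i<d. \<phi> x i = 0 \<and> \<Omega> x i = 0)"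
    and "\<forall>zz\<in>omega_limit (fbold s f0) (P \<times> W \<times> Z).
           (\<forall>i<d. frechet_derivative (\<tau> i) (at zz) (fbold s f0 zz)
                   = shiftA d (\<lambda>j. \<tau> j zz) i + \<phi> (\<tau> 0 zz) i + \<Omega> (\<tau> 0 zz) i \<bullet> \<theta> (fst zz))
           \<and> - qf (zz, 0) = \<tau> 0 zz"
    \<comment> \<open>design quantities\<close>
    and "b 0 = 1"
    and "finite {x::complex. x ^ (d - 1) + (\<Sum>j\<in>{1..<d}. complex_of_real (b j) * x ^ (d - 1 - j)) = 0}"
    and "card {x::complex. x ^ (d - 1) + (\<Sum>j\<in>{1..<d}. complex_of_real (b j) * x ^ (d - 1 - j)) = 0} = d - 1"
    and "\<forall>x::complex. x ^ (d - 1) + (\<Sum>j\<in>{1..<d}. complex_of_real (b j) * x ^ (d - 1 - j)) = 0 \<longrightarrow> Re x < 0"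
    and "\<forall>\<rho>\<in>P. norm (\<theta> \<rho>) < ell"
    and "C1_on UNIV dz" and "\<forall>x. \<bar>x\<bar> \<le> ell \<longrightarrow> dz x = 0" and "\<forall>x. \<bar>x\<bar> \<ge> ell + 1 \<longrightarrow> dz x = x"
  shows "\<exists>lam_star. \<forall>lam\<ge>lam_star. \<forall>I zz chi th X.
     fwd_interval I \<and> zz 0 \<in> P \<times> W \<times> Z \<and> ode_sol (fbold s f0) I zz
     \<and> (\<forall>t\<in>I. \<forall>i<d. ((\<lambda>t. chi t i) has_real_derivative
           (shiftA d (chi t) i - Kvec d b lam i * chi t 0
            + b i * (betav d (X t) \<Omega> (chi t 0 + \<tau> 0 (zz t)) \<bullet> th t)
            + (\<phi> (chi t 0 + \<tau> 0 (zz t)) i - \<phi> (chi t 0) i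
               + (\<Omega> (chi t 0 + \<tau> 0 (zz t)) i - \<Omega> (chi t 0) i) \<bullet> \<theta> (fst (zz t)))
            + (Kvec d b lam i * (- qf (zz t, 0) - \<tau> 0 (zz t)) + shiftA d (\<lambda>j. \<tau> j (zz t)) i
               + \<phi> (\<tau> 0 (zz t)) i + \<Omega> (\<tau> 0 (zz t)) i \<bullet> \<theta> (fst (zz t))
               - frechet_derivative (\<tau> i) (at (zz t)) (fbold s f0 (zz t)))))
          (at t within I))
     \<and> (\<forall>t\<in>I. (th has_vector_derivative
           (- (chi t 0 *\<^sub>R betav d (X t) \<Omega> (chi t 0 + \<tau> 0 (zz t)))
            - dzv dz (th t + \<theta> (fst (zz t))))) (at t within I))
     \<and> (\<forall>t\<in>I. \<forall>i<d - 1. ((\<lambda>t. X t i) has_vector_derivative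
           ((\<Sum>j<d - 1. FGmat b i j *\<^sub>R X t j)
            + (\<Sum>j<d. FGmat b i j *\<^sub>R \<Omega> (chi t 0 + \<tau> 0 (zz t)) j))) (at t within I))
     \<longrightarrow> (\<exists>B. \<forall>t\<in>I. norm (zz t) \<le> B \<and> (\<forall>i<d. \<bar>chi t i\<bar> \<le> B) \<and> norm (th t) \<le> B
                   \<and> (\<forall>i<d - 1. norm (X t i) \<le> B))"
proof -
  obtain U where U: "ZZ \<subseteq> U" "\<And>i. i < d \<Longrightarrow> C1_on U (\<tau> i)"
    using assms(15) by blast
  obtain R where R: "\<And>x i. R < \<bar>x\<bar> \<Longrightarrow> i < d \<Longrightarrow> \<phi> x i = 0 \<and> \<Omega> x i = 0"
    using assms(19) by blast
  have \<phi>_cont: "continuous_on UNIV (\<lambda>x. \<phi> x i)" and \<Omega>_cont: "continuous_on UNIV (\<lambda>x. \<Omega> x i)"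
    if "i < d" for i
    using assms(17,18) that by (simp_all add: C1_on_imp_continuous_on)
  have "\<exists>M. \<forall>i<d. \<forall>x. norm (\<phi> x i) \<le> M"
    using \<phi>_cont R by (intro bounded_if_compact_support[where R = R]) auto
  then obtain M\<phi> where M\<phi>: "\<And>i x. i < d \<Longrightarrow> \<bar>\<phi> x i\<bar> \<le> M\<phi>"
    by auto
  have "\<exists>M. \<forall>i<d. \<forall>x. norm (\<Omega> x i) \<le> M"
    using \<Omega>_cont R by (intro bounded_if_compact_support[where R = R]) auto
  then obtain M\<Omega> where M\<Omega>: "\<And>i x. i < d \<Longrightarrow> norm (\<Omega> x i) \<le> M\<Omega>"
    by auto
  have "bounded (dz ` cball 0 (ell + 1))"
    using C1_on_imp_continuous_on[OF assms(26)]
    by (intro compact_imp_bounded compact_continuous_image) (auto intro: continuous_on_subset)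
  then obtain Md where "\<forall>y\<in>cball 0 (ell + 1). \<bar>dz y\<bar> \<le> Md"
    unfolding bounded_iff by auto
  then have Md: "\<And>y. \<bar>y\<bar> \<le> ell + 1 \<Longrightarrow> \<bar>dz y\<bar> \<le> Md"
    by (simp add: mem_cball_0)
  have "companion_roots b (d - 1)
      = {x. x ^ (d - 1) + (\<Sum>j\<in>{1..<d}. complex_of_real (b j) * x ^ (d - 1 - j)) = 0}"
    using assms(14) by (simp add: companion_roots_def atLeastLessThanSuc_atLeastAtMost[symmetric])
  then have hurwitz: "simple_hurwitz b (d - 1)"
    using assms(22-24) by (simp add: simple_hurwitz_def)
  have fbold_cont: "continuous_on ZZ (fbold s f0)"
  proof -
    have "fbold s f0 = (\<lambda>z. (0, s (fst z, fst (snd z)), f0 z))"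
      by (auto simp: fbold_def fun_eq_iff split: prod.split)
    then show ?thesis
      using C1_on_imp_continuous_on[OF assms(4)] C1_on_imp_continuous_on[OF assms(5)]
      by (auto intro!: continuous_intros intro: continuous_on_compose2)
  qed
  have \<theta>_cont: "continuous_on ZZ (\<lambda>z. \<theta> (fst z))"
    using assms(10) by (intro continuous_on_compose2[OF assms(16) continuous_on_fst[OF continuous_on_id]]) auto
  have qf_cont: "continuous_on ZZ (\<lambda>z. - qf (z, 0))"
    by (intro continuous_intros continuous_on_compose2[OF C1_on_imp_continuous_on[OF assms(6)]]) auto
  obtain Bz where Bz: "\<And>z. z \<in> ZZ \<Longrightarrow> norm z \<le> Bz"
    using compact_imp_bounded[OF assms(9)] unfolding bounded_iff by auto
  show ?thesis
  proof (rule exI[of _ 1], intro allI impI; elim conjE, goal_cases)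
    case (1 lam I zz chi th X)
    have zZ: "zz t \<in> ZZ" if "t \<in> I" for t
      using assms(11)[rule_format, of I zz t] "1"(2-4) that by blast
    have "\<exists>B. \<forall>t\<in>I. (\<forall>i<d. \<bar>chi t i\<bar> \<le> B) \<and> norm (th t) \<le> B \<and> (\<forall>i<d - 1. norm (X t i) \<le> B)"
    proof (rule error_system_bounded[where z = zz and y = "\<lambda>t. \<tau> 0 (zz t)" and c = "\<lambda>t. \<theta> (fst (zz t))"
          and \<psi> = "\<lambda>i z. Kvec d b lam i * (- qf (z, 0) - \<tau> 0 z) + shiftA d (\<lambda>j. \<tau> j z) i
            + \<phi> (\<tau> 0 z) i + \<Omega> (\<tau> 0 z) i \<bullet> \<theta> (fst z) - frechet_derivative (\<tau> i) (at z) (fbold s f0 z)",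
          OF "1"(2) assms(14) hurwitz assms(21) "1"(1) assms(9) zZ _ M\<phi> M\<Omega> _ Md assms(28)[rule_format]])
      show "continuous_on ZZ (\<lambda>z. Kvec d b lam i * (- qf (z, 0) - \<tau> 0 z) + shiftA d (\<lambda>j. \<tau> j z) i
          + \<phi> (\<tau> 0 z) i + \<Omega> (\<tau> 0 z) i \<bullet> \<theta> (fst z) - frechet_derivative (\<tau> i) (at z) (fbold s f0 z))"
        if "i < d" for i
        using that by (intro continuous_on_immersion_residual[OF U] qf_cont \<phi>_cont \<Omega>_cont \<theta>_cont fbold_cont)
      show "norm (\<theta> (fst (zz t))) \<le> ell" if "t \<in> I" for t
        using zZ[OF that] assms(10,25) by (force simp: less_imp_le)
    qed (use "1"(5-7) in auto)
    then obtain B where B: "\<And>t. t \<in> I \<Longrightarrow>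
        (\<forall>i<d. \<bar>chi t i\<bar> \<le> B) \<and> norm (th t) \<le> B \<and> (\<forall>i<d - 1. norm (X t i) \<le> B)"
      by blast
    have "norm (zz t) \<le> max Bz B \<and> (\<forall>i<d. \<bar>chi t i\<bar> \<le> max Bz B) \<and> norm (th t) \<le> max Bz B
        \<and> (\<forall>i<d - 1. norm (X t i) \<le> max Bz B)" if "t \<in> I" for t
      using B[OF that] Bz[OF zZ[OF that]] by (simp add: le_max_iff_disj)
    then show ?case by blast
  qed
qed

end
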